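(* Let $P$ be a distribution on $\mathcal{X}$, $R>0$, $K>0$. Then \[ E_e(P,R,K)=\sup_{0\le\eta\le\rho\le 1}\big\{E_0(\rho,\eta,P)-\rho R-\eta K\big\}, \] where \[ E_e(P,R,K)=\min_{TV}\Big\{D(TV\|PW)+\big|A_{TV}-R+|B_{TV}-K|^{+}\big|^{+}\Big\},\qquad E_0(\rho,\eta,P)=-\log\sum_{y}\Big[\sum_x P(x)W^{\frac{1+\eta}{1+\rho}}(y|x)\Big]^{1+\rho}. \]
   Context: $\mathcal{X},\mathcal{Y}$ are finite alphabets and $W(y|x)$ is a conditional distribution on $\mathcal{Y}$ given $\mathcal{X}$. Logs are natural. $TV$ is a joint distribution on $\mathcal{Y}\times\mathcal{X}$ with $\mathcal{Y}$-marginal $T$ and conditional $V(x|y)$, minimized over all such distributions; $PW$ is $P(x)W(y|x)$; $D(TV\|PW)=\sum T(y)V(x|y)\log\frac{T(y)V(x|y)}{P(x)W(y|x)}$; $A_{TV}=\sum T(y)V(x|y)\log\frac{V(x|y)}{P(x)}$; $B_{TV}=\mathbb{E}_{TV}[-\log W(Y|X)]$; $|t|^{+}=\max\{0,t\}$. *)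

theory Defs
  imports "HOL-Analysis.Analysis"
begin

text \<open>Channel W(y|x) is written W x y; a joint distribution TV on Y x X is Q y x = T(y) V(x|y).\<close>

definition channel :: "('x::finite \<Rightarrow> 'y::finite \<Rightarrow> real) \<Rightarrow> bool" where
  "channel W \<longleftrightarrow> (\<forall>x y. 0 \<le> W x y) \<and> (\<forall>x. (\<Sum>y\<in>UNIV. W x y) = 1)"

definition distr :: "('a::finite \<Rightarrow> real) \<Rightarrow> bool" where
  "distr P \<longleftrightarrow> (\<forall>a. 0 \<le> P a) \<and> (\<Sum>a\<in>UNIV. P a) = 1"

definition posp :: "real \<Rightarrow> real" where
  "posp t = max 0 t"

text \<open>Joint distributions on Y x X for which D(TV||PW) is finite
  (all others have D = +infinity and do not affect the minimum).\<close>
definition joint_dists :: "('x::finite \<Rightarrow> real) \<Rightarrow> ('x \<Rightarrow> 'y::finite \<Rightarrow> real) \<Rightarrow> ('y \<Rightarrow> 'x \<Rightarrow> real) set" where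
  "joint_dists P W = {Q. (\<forall>y x. 0 \<le> Q y x) \<and> (\<Sum>y\<in>UNIV. \<Sum>x\<in>UNIV. Q y x) = 1
                        \<and> (\<forall>y x. 0 < Q y x \<longrightarrow> 0 < P x * W x y)}"

definition margT :: "('y \<Rightarrow> 'x::finite \<Rightarrow> real) \<Rightarrow> 'y \<Rightarrow> real" where
  "margT Q y = (\<Sum>x\<in>UNIV. Q y x)"

definition condV :: "('y \<Rightarrow> 'x::finite \<Rightarrow> real) \<Rightarrow> 'y \<Rightarrow> 'x \<Rightarrow> real" where
  "condV Q y x = Q y x / margT Q y"

text \<open>Terms with Q y x = 0 vanish (convention 0 log 0 = 0).\<close>
definition divKL :: "('y::finite \<Rightarrow> 'x::finite \<Rightarrow> real) \<Rightarrow> ('x \<Rightarrow> real) \<Rightarrow> ('x \<Rightarrow> 'y \<Rightarrow> real) \<Rightarrow> real" where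
  "divKL Q P W = (\<Sum>y\<in>UNIV. \<Sum>x\<in>UNIV. Q y x * ln (Q y x / (P x * W x y)))"

definition A_TV :: "('y::finite \<Rightarrow> 'x::finite \<Rightarrow> real) \<Rightarrow> ('x \<Rightarrow> real) \<Rightarrow> real" where
  "A_TV Q P = (\<Sum>y\<in>UNIV. \<Sum>x\<in>UNIV. Q y x * ln (condV Q y x / P x))"

definition B_TV :: "('y::finite \<Rightarrow> 'x::finite \<Rightarrow> real) \<Rightarrow> ('x \<Rightarrow> 'y \<Rightarrow> real) \<Rightarrow> real" where
  "B_TV Q W = (\<Sum>y\<in>UNIV. \<Sum>x\<in>UNIV. Q y x * (- ln (W x y)))"

definition E_e :: "('x::finite \<Rightarrow> 'y::finite \<Rightarrow> real) \<Rightarrow> ('x \<Rightarrow> real) \<Rightarrow> real \<Rightarrow> real \<Rightarrow> real" where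
  "E_e W P R K = (INF Q\<in>joint_dists P W.
      divKL Q P W + posp (A_TV Q P - R + posp (B_TV Q W - K)))"

definition E_0 :: "('x::finite \<Rightarrow> 'y::finite \<Rightarrow> real) \<Rightarrow> real \<Rightarrow> real \<Rightarrow> ('x \<Rightarrow> real) \<Rightarrow> real" where
  "E_0 W \<rho> \<eta> P = - ln (\<Sum>y\<in>UNIV.
      (\<Sum>x\<in>UNIV. P x * W x y powr ((1 + \<eta>) / (1 + \<rho>))) powr (1 + \<rho>))"

end

theory Submission
  imports Defs
begin

text \<open>
  For \<rho> > -1, Gallager's function is the value of a variational problem:
  E_0(\<rho>,\<eta>,P) is the minimum over TV of D(TV||PW) + \<rho> A_TV + \<eta> B_TV. The lower bound is the
  log-sum inequality, applied over x for each y and then over y; the minimum is attained by an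
  explicit tilted distribution depending continuously on (\<rho>,\<eta>). Hence the right-hand side is
  the maximum over the triangle 0 \<le> \<eta> \<le> \<rho> \<le> 1 of the lower envelope of the affine functions
  L_TV(\<rho>,\<eta>) = D + \<rho>(A_TV - R) + \<eta>(B_TV - K), while the objective defining E_e is the maximum
  of L_TV over the vertices of the triangle. So the two sides are a max-min and a min-max of L.
  They agree because a maximiser p* of the envelope gives a saddle point. Write Q_p for the
  tilted distribution. For p = (1 - t) p* + t v, affinity gives
  envelope(p) = (1 - t) L_Q_p(p*) + t L_Q_p(v) \<ge> (1 - t) envelope(p*) + t L_Q_p(v), and
  envelope(p) \<le> envelope(p*); hence L_Q_p(v) \<le> envelope(p*), and letting t tend to 0 gives
  L_Q_p*(v) \<le> envelope(p*).
\<close>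

lemma mult_ln_div_lower_bound:
  fixes a b \<alpha> \<beta> :: real
  assumes "0 \<le> a" "0 \<le> b" "0 < a \<Longrightarrow> 0 < b" "0 < \<alpha>" "0 < \<beta>"
  shows "a * ln (\<alpha> / \<beta>) + a - b * \<alpha> / \<beta> \<le> a * ln (a / b)"
proof (cases "a = 0")
  case False
  then have a: "0 < a" and b: "0 < b" using assms by auto
  have "ln (b * \<alpha> / (a * \<beta>)) \<le> b * \<alpha> / (a * \<beta>) - 1"
    using a b assms by (intro ln_le_minus_one) simp
  also have "ln (b * \<alpha> / (a * \<beta>)) = ln (\<alpha> / \<beta>) - ln (a / b)"
    using a b assms by (simp add: ln_div ln_mult)
  finally have "a * (ln (\<alpha> / \<beta>) - ln (a / b)) \<le> a * (b * \<alpha> / (a * \<beta>) - 1)"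
    using a by (simp add: mult_left_mono)
  then show ?thesis
    using a by (simp add: field_simps)
qed (use assms in simp)

lemma log_sum_inequality:
  fixes a b :: "'i \<Rightarrow> real"
  assumes "finite I" and a: "\<And>i. i \<in> I \<Longrightarrow> 0 \<le> a i" and b: "\<And>i. i \<in> I \<Longrightarrow> 0 \<le> b i"
    and supp: "\<And>i. i \<in> I \<Longrightarrow> 0 < a i \<Longrightarrow> 0 < b i"
  shows "sum a I * ln (sum a I / sum b I) \<le> (\<Sum>i\<in>I. a i * ln (a i / b i))"
proof (cases "sum a I = 0")
  case True
  then have "\<forall>i\<in>I. a i = 0" using sum_nonneg_eq_0_iff[OF \<open>finite I\<close>] a by blast
  then show ?thesis using True by simp
next
  case False
  then obtain j where j: "j \<in> I" "0 < a j"
    using a by (metis less_eq_real_def sum.neutral)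
  then have "0 < sum b I"
    using assms by (intro sum_pos2[of I j]) auto
  moreover have "0 < sum a I"
    using False a by (simp add: less_le sum_nonneg)
  ultimately have "(\<Sum>i\<in>I. a i * ln (sum a I / sum b I) + a i - b i * sum a I / sum b I)
      \<le> (\<Sum>i\<in>I. a i * ln (a i / b i))"
    using a b supp by (intro sum_mono mult_ln_div_lower_bound) auto
  then show ?thesis
    using \<open>0 < sum b I\<close>
    by (simp add: sum.distrib sum_subtractf sum_distrib_right[symmetric] sum_divide_distrib[symmetric])
qed

lemma cINF_eq_cSUP_if_attained:
  fixes f :: "'a \<Rightarrow> 'c::conditionally_complete_lattice" and g :: "'b \<Rightarrow> 'c"
  assumes le: "\<And>p q. p \<in> S \<Longrightarrow> q \<in> J \<Longrightarrow> f p \<le> g q"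
    and "p\<^sub>0 \<in> S" "q\<^sub>0 \<in> J" "g q\<^sub>0 \<le> f p\<^sub>0"
  shows "(INF q\<in>J. g q) = (SUP p\<in>S. f p)"
proof (rule antisym)
  have "(INF q\<in>J. g q) \<le> g q\<^sub>0"
    using assms by (intro cINF_lower bdd_belowI2[where m="f p\<^sub>0"]) auto
  also have "\<dots> \<le> f p\<^sub>0" by fact
  also have "\<dots> \<le> (SUP p\<in>S. f p)"
    using assms by (intro cSUP_upper bdd_aboveI2[where M="g q\<^sub>0"]) auto
  finally show "(INF q\<in>J. g q) \<le> (SUP p\<in>S. f p)" .
  show "(SUP p\<in>S. f p) \<le> (INF q\<in>J. g q)"
    using assms by (intro cSUP_least cINF_greatest) auto
qed

lemma saddle_point_of_lower_envelope:
  fixes L :: "'q \<Rightarrow> 'p::real_normed_vector \<Rightarrow> real" and \<sigma> :: "'p \<Rightarrow> 'q"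
  assumes "compact S" "convex S" "S \<noteq> {}" "continuous_on S F"
    and lower: "\<And>p Q. p \<in> S \<Longrightarrow> Q \<in> J \<Longrightarrow> F p \<le> L Q p"
    and attained: "\<And>p. p \<in> S \<Longrightarrow> \<sigma> p \<in> J \<and> F p = L (\<sigma> p) p"
    and affine: "\<And>Q a b t. L Q ((1 - t) *\<^sub>R a + t *\<^sub>R b) = (1 - t) * L Q a + t * L Q b"
    and cont: "\<And>v. v \<in> S \<Longrightarrow> continuous_on S (\<lambda>p. L (\<sigma> p) v)"
  obtains p\<^sub>0 where "p\<^sub>0 \<in> S" "\<And>v. v \<in> S \<Longrightarrow> L (\<sigma> p\<^sub>0) v \<le> F p\<^sub>0"
proof -
  obtain p\<^sub>0 where p\<^sub>0: "p\<^sub>0 \<in> S" and max: "\<And>p. p \<in> S \<Longrightarrow> F p \<le> F p\<^sub>0"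
    using continuous_attains_sup[OF \<open>compact S\<close> \<open>S \<noteq> {}\<close> \<open>continuous_on S F\<close>] by blast
  have "L (\<sigma> p\<^sub>0) v \<le> F p\<^sub>0" if v: "v \<in> S" for v
  proof -
    define p where "p t = (1 - t) *\<^sub>R p\<^sub>0 + t *\<^sub>R v" for t
    have p_in: "p t \<in> S" if "0 \<le> t" "t \<le> 1" for t
      unfolding p_def using that p\<^sub>0 v \<open>convex S\<close> by (intro convexD) auto
    have step: "L (\<sigma> (p t)) v \<le> F p\<^sub>0" if t: "0 < t" "t \<le> 1" for t
    proof -
      have "(1 - t) * F p\<^sub>0 + t * L (\<sigma> (p t)) v \<le> (1 - t) * L (\<sigma> (p t)) p\<^sub>0 + t * L (\<sigma> (p t)) v"
        using t p_in[of t] lower[OF p\<^sub>0] attained by (simp add: mult_left_mono)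
      also have "\<dots> = F (p t)"
        using t p_in[of t] attained by (simp add: p_def affine)
      also have "\<dots> \<le> F p\<^sub>0"
        using t p_in max by simp
      finally show ?thesis
        using t by (simp add: algebra_simps)
    qed
    have "(p \<longlongrightarrow> p\<^sub>0) (at_right 0)"
      unfolding p_def by (auto intro!: tendsto_eq_intros)
    moreover have "eventually (\<lambda>t. p t \<in> S) (at_right 0)"
      by (rule eventually_at_rightI[of 0 1]) (auto intro: p_in)
    ultimately have "((\<lambda>t. L (\<sigma> (p t)) v) \<longlongrightarrow> L (\<sigma> p\<^sub>0) v) (at_right 0)"
      by (rule continuous_on_tendsto_compose[OF cont[OF v] _ p\<^sub>0])
    moreover have "eventually (\<lambda>t. L (\<sigma> (p t)) v \<le> F p\<^sub>0) (at_right 0)"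
      by (rule eventually_at_rightI[of 0 1]) (auto intro: step)
    ultimately show ?thesis
      by (rule tendsto_upperbound) simp
  qed
  then show thesis using p\<^sub>0 that by blast
qed

definition multiplier_triangle :: "(real \<times> real) set" where
  "multiplier_triangle = {(\<rho>, \<eta>). 0 \<le> \<eta> \<and> \<eta> \<le> \<rho> \<and> \<rho> \<le> 1}"

lemma mem_multiplier_triangle:
  "p \<in> multiplier_triangle \<longleftrightarrow> 0 \<le> snd p \<and> snd p \<le> fst p \<and> fst p \<le> 1"
  by (cases p) (simp add: multiplier_triangle_def)

lemma multiplier_triangle_halfspaces:
  "multiplier_triangle =
     {p. inner (0, -1) p \<le> 0} \<inter> {p. inner (-1, 1) p \<le> 0} \<inter> {p. inner (1, 0) p \<le> (1::real)}"
  by (auto simp: mem_multiplier_triangle inner_prod_def)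

lemma convex_multiplier_triangle: "convex multiplier_triangle"
  unfolding multiplier_triangle_halfspaces by (intro convex_Int convex_halfspace_le)

lemma compact_multiplier_triangle: "compact multiplier_triangle"
proof -
  have "closed multiplier_triangle"
    unfolding multiplier_triangle_halfspaces by (intro closed_Int closed_halfspace_le)
  moreover have "multiplier_triangle \<subseteq> cbox (0, 0) (1, 1)"
    by (auto simp: mem_multiplier_triangle cbox_Pair_eq)
  ultimately show ?thesis
    using bounded_cbox bounded_subset compact_eq_bounded_closed by blast
qed

lemma affine_le_posp_posp:
  fixes a b \<rho> \<eta> :: real
  assumes "0 \<le> \<eta>" "\<eta> \<le> \<rho>" "\<rho> \<le> 1"
  shows "\<rho> * a + \<eta> * b \<le> posp (a + posp b)"
proof -
  have "\<rho> * a + \<eta> * b \<le> \<rho> * a + \<rho> * max 0 b"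
    using assms by (intro add_left_mono order.trans[OF mult_left_mono mult_right_mono]) auto
  also have "\<dots> \<le> max 0 (a + max 0 b)"
    using assms by (cases "0 \<le> a + max 0 b")
      (auto simp: distrib_left[symmetric] intro: mult_left_le_one_le mult_nonneg_nonpos)
  finally show ?thesis by (simp add: posp_def)
qed

locale channel_input =
  fixes W :: "'x::finite \<Rightarrow> 'y::finite \<Rightarrow> real" and P :: "'x \<Rightarrow> real"
  assumes channel: "channel W" and distr: "distr P"
begin

lemma W_nonneg: "0 \<le> W x y"
  using channel by (simp add: channel_def)

lemma P_nonneg: "0 \<le> P x"
  using distr by (simp add: distr_def)

lemma PW_nonneg: "0 \<le> P x * W x y"
  by (simp add: P_nonneg W_nonneg)

lemma ex_PW_pos: "\<exists>x y. 0 < P x * W x y"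
proof -
  have "(\<Sum>x\<in>UNIV. \<Sum>y\<in>UNIV. P x * W x y) = 1"
    using channel distr by (simp add: channel_def distr_def flip: sum_distrib_left)
  then obtain x y where "P x * W x y \<noteq> 0"
    by (metis (mono_tags) sum.neutral zero_neq_one)
  then have "0 < P x * W x y"
    using PW_nonneg[of x y] by linarith
  then show ?thesis by blast
qed

definition tilted_weight :: "real \<Rightarrow> real \<Rightarrow> 'y \<Rightarrow> 'x \<Rightarrow> real" where
  "tilted_weight \<rho> \<eta> y x = P x * W x y powr ((1 + \<eta>) / (1 + \<rho>))"

definition inner_sum :: "real \<Rightarrow> real \<Rightarrow> 'y \<Rightarrow> real" where
  "inner_sum \<rho> \<eta> y = (\<Sum>x\<in>UNIV. tilted_weight \<rho> \<eta> y x)"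

definition gallager_sum :: "real \<Rightarrow> real \<Rightarrow> real" where
  "gallager_sum \<rho> \<eta> = (\<Sum>y\<in>UNIV. inner_sum \<rho> \<eta> y powr (1 + \<rho>))"

text \<open>Output marginal inner_sum^(1+\<rho>) / gallager_sum and conditional tilted_weight / inner_sum:
  the distribution for which both log-sum inequalities in the bound on E_0 are equalities.\<close>

definition tilted_joint :: "real \<Rightarrow> real \<Rightarrow> 'y \<Rightarrow> 'x \<Rightarrow> real" where
  "tilted_joint \<rho> \<eta> y x = inner_sum \<rho> \<eta> y powr \<rho> * tilted_weight \<rho> \<eta> y x / gallager_sum \<rho> \<eta>"

lemma E_0_eq_minus_ln_gallager_sum: "E_0 W \<rho> \<eta> P = - ln (gallager_sum \<rho> \<eta>)"
  by (simp add: E_0_def gallager_sum_def inner_sum_def tilted_weight_def)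

lemma tilted_weight_nonneg: "0 \<le> tilted_weight \<rho> \<eta> y x"
  by (simp add: tilted_weight_def P_nonneg)

lemma tilted_weight_pos_iff: "0 < tilted_weight \<rho> \<eta> y x \<longleftrightarrow> 0 < P x * W x y"
  using P_nonneg[of x] W_nonneg[of x y]
  by (auto simp: tilted_weight_def zero_less_mult_iff)

lemma inner_sum_nonneg: "0 \<le> inner_sum \<rho> \<eta> y"
  by (simp add: inner_sum_def sum_nonneg tilted_weight_nonneg)

lemma inner_sum_pos: "0 < P x * W x y \<Longrightarrow> 0 < inner_sum \<rho> \<eta> y"
  unfolding inner_sum_def
  by (rule sum_pos2[of UNIV x]) (auto simp: tilted_weight_nonneg tilted_weight_pos_iff)

lemma gallager_sum_pos: "0 < gallager_sum \<rho> \<eta>"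
proof -
  obtain x y where "0 < P x * W x y"
    using ex_PW_pos by blast
  then have "0 < inner_sum \<rho> \<eta> y"
    by (rule inner_sum_pos)
  then have "0 < inner_sum \<rho> \<eta> y powr (1 + \<rho>)"
    by simp
  then show ?thesis
    unfolding gallager_sum_def by (intro sum_pos2[of UNIV y]) auto
qed

lemma tilted_joint_nonneg: "0 \<le> tilted_joint \<rho> \<eta> y x"
  unfolding tilted_joint_def
  by (intro divide_nonneg_pos mult_nonneg_nonneg gallager_sum_pos tilted_weight_nonneg) simp

lemma margT_tilted_joint:
  "margT (tilted_joint \<rho> \<eta>) y = inner_sum \<rho> \<eta> y powr (1 + \<rho>) / gallager_sum \<rho> \<eta>"
  by (simp add: margT_def tilted_joint_def powr_add powr_one inner_sum_nonneg
      flip: sum_divide_distrib sum_distrib_left inner_sum_def)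

lemma tilted_joint_in_joint_dists: "tilted_joint \<rho> \<eta> \<in> joint_dists P W"
proof -
  have "(\<Sum>y\<in>UNIV. \<Sum>x\<in>UNIV. tilted_joint \<rho> \<eta> y x) = gallager_sum \<rho> \<eta> / gallager_sum \<rho> \<eta>"
    by (simp add: margT_tilted_joint gallager_sum_def flip: margT_def sum_divide_distrib)
  also have "\<dots> = 1"
    using gallager_sum_pos[of \<rho> \<eta>] by simp
  finally have "(\<Sum>y\<in>UNIV. \<Sum>x\<in>UNIV. tilted_joint \<rho> \<eta> y x) = 1" .
  moreover have "0 < P x * W x y" if "0 < tilted_joint \<rho> \<eta> y x" for y x
  proof -
    have "tilted_weight \<rho> \<eta> y x \<noteq> 0"
      using that by (auto simp: tilted_joint_def)
    then have "0 < tilted_weight \<rho> \<eta> y x"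
      using tilted_weight_nonneg[of \<rho> \<eta> y x] by (simp add: less_le)
    then show ?thesis
      by (simp add: tilted_weight_pos_iff)
  qed
  ultimately show ?thesis
    by (simp add: joint_dists_def tilted_joint_nonneg)
qed

lemma joint_nonneg: "Q \<in> joint_dists P W \<Longrightarrow> 0 \<le> Q y x"
  by (simp add: joint_dists_def)

lemma joint_pos_imp_PW_pos: "Q \<in> joint_dists P W \<Longrightarrow> 0 < Q y x \<Longrightarrow> 0 < P x * W x y"
  by (simp add: joint_dists_def)

lemma joint_le_margT: "Q \<in> joint_dists P W \<Longrightarrow> Q y x \<le> margT Q y"
  unfolding margT_def by (rule member_le_sum) (auto simp: joint_nonneg)

lemma inner_sum_pos_if_margT_pos:
  assumes Q: "Q \<in> joint_dists P W" and "0 < margT Q y"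
  shows "0 < inner_sum \<rho> \<eta> y"
proof -
  obtain x where "0 < Q y x"
    using assms(2) by (metis margT_def not_le sum_nonpos)
  then show ?thesis
    by (intro inner_sum_pos joint_pos_imp_PW_pos[OF Q])
qed

lemma divKL_A_B_eq_sum:
  assumes Q: "Q \<in> joint_dists P W" and \<rho>: "-1 < \<rho>"
  shows "divKL Q P W + \<rho> * A_TV Q P + \<eta> * B_TV Q W =
    (\<Sum>y\<in>UNIV. \<Sum>x\<in>UNIV. Q y x *
       (ln (margT Q y) + (1 + \<rho>) * ln (Q y x / (margT Q y * tilted_weight \<rho> \<eta> y x))))"
  unfolding divKL_def A_TV_def B_TV_def sum_distrib_left sum.distrib[symmetric]
proof (intro sum.cong refl)
  fix y x
  show "Q y x * ln (Q y x / (P x * W x y)) + \<rho> * (Q y x * ln (condV Q y x / P x))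
      + \<eta> * (Q y x * - ln (W x y))
    = Q y x * (ln (margT Q y) + (1 + \<rho>) * ln (Q y x / (margT Q y * tilted_weight \<rho> \<eta> y x)))"
  proof (cases "Q y x = 0")
    case False
    then have q: "0 < Q y x"
      using joint_nonneg[OF Q] by (simp add: less_le)
    then have "0 < P x * W x y"
      by (rule joint_pos_imp_PW_pos[OF Q])
    then have wt: "0 < tilted_weight \<rho> \<eta> y x"
      by (simp add: tilted_weight_pos_iff)
    from \<open>0 < P x * W x y\<close> have p: "0 < P x" and w: "0 < W x y"
      using P_nonneg[of x] W_nonneg[of x y] by (auto simp: zero_less_mult_iff)
    have t: "0 < margT Q y"
      using q joint_le_margT[OF Q, of y x] by linarith
    have "(1 + \<rho>) * ln (tilted_weight \<rho> \<eta> y x) = (1 + \<rho>) * ln (P x) + (1 + \<eta>) * ln (W x y)"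
      using p w \<rho> by (simp add: tilted_weight_def ln_mult field_simps)
    then have tilted: "(1 + \<rho>) * ln (Q y x / (margT Q y * tilted_weight \<rho> \<eta> y x))
      = (1 + \<rho>) * (ln (Q y x) - ln (margT Q y)) - (1 + \<rho>) * ln (P x) - (1 + \<eta>) * ln (W x y)"
      using q t wt by (simp add: ln_div ln_mult algebra_simps)
    have divergence: "ln (Q y x / (P x * W x y)) = ln (Q y x) - ln (P x) - ln (W x y)"
      using q p w by (simp add: ln_div ln_mult)
    have conditional: "ln (condV Q y x / P x) = ln (Q y x) - ln (margT Q y) - ln (P x)"
      using q p t by (simp add: condV_def ln_div ln_mult)
    show ?thesis
      unfolding tilted divergence conditional by (simp add: algebra_simps)
  qed simp
qed

lemma log_sum_given_output:
  assumes Q: "Q \<in> joint_dists P W" and \<rho>: "-1 < \<rho>"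
  shows "margT Q y * ln (margT Q y / inner_sum \<rho> \<eta> y powr (1 + \<rho>))
    \<le> (\<Sum>x\<in>UNIV. Q y x *
         (ln (margT Q y) + (1 + \<rho>) * ln (Q y x / (margT Q y * tilted_weight \<rho> \<eta> y x))))"
proof (cases "margT Q y = 0")
  case True
  then have "Q y x = 0" for x
    using joint_nonneg[OF Q] joint_le_margT[OF Q, of y x] by (simp add: order.antisym)
  then show ?thesis
    using True by simp
next
  case False
  let ?L = "\<lambda>x. ln (Q y x / (margT Q y * tilted_weight \<rho> \<eta> y x))"
  have t: "0 < margT Q y"
    using False joint_nonneg[OF Q] by (simp add: margT_def less_le sum_nonneg)
  have g: "0 < inner_sum \<rho> \<eta> y"
    by (rule inner_sum_pos_if_margT_pos[OF Q t])
  have "margT Q y * ln (margT Q y / (\<Sum>x\<in>UNIV. margT Q y * tilted_weight \<rho> \<eta> y x))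
      \<le> (\<Sum>x\<in>UNIV. Q y x * ?L x)"
    unfolding margT_def
  proof (rule log_sum_inequality)
    fix x
    assume "0 < Q y x"
    then have "0 < P x * W x y"
      by (rule joint_pos_imp_PW_pos[OF Q])
    then show "0 < sum (Q y) UNIV * tilted_weight \<rho> \<eta> y x"
      using t by (simp add: margT_def tilted_weight_pos_iff)
  qed (use t joint_nonneg[OF Q] tilted_weight_nonneg in \<open>auto simp: margT_def\<close>)
  then have "- margT Q y * ln (inner_sum \<rho> \<eta> y) \<le> (\<Sum>x\<in>UNIV. Q y x * ?L x)"
    using t g by (simp add: ln_div ln_mult flip: sum_distrib_left inner_sum_def)
  then have "(1 + \<rho>) * (- margT Q y * ln (inner_sum \<rho> \<eta> y))
      \<le> (1 + \<rho>) * (\<Sum>x\<in>UNIV. Q y x * ?L x)"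
    using \<rho> by (intro mult_left_mono) auto
  then show ?thesis
    using t g
    by (simp add: ln_div distrib_left sum.distrib margT_def sum_distrib_left sum_distrib_right
        mult.left_commute algebra_simps)
qed

lemma E_0_le_divKL_A_B:
  assumes Q: "Q \<in> joint_dists P W" and \<rho>: "-1 < \<rho>"
  shows "E_0 W \<rho> \<eta> P \<le> divKL Q P W + \<rho> * A_TV Q P + \<eta> * B_TV Q W"
proof -
  have "sum (margT Q) UNIV * ln (sum (margT Q) UNIV / gallager_sum \<rho> \<eta>)
      \<le> (\<Sum>y\<in>UNIV. margT Q y * ln (margT Q y / inner_sum \<rho> \<eta> y powr (1 + \<rho>)))"
    unfolding gallager_sum_def
  proof (rule log_sum_inequality)
    fix y
    assume "0 < margT Q y"
    then have "0 < inner_sum \<rho> \<eta> y"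
      by (rule inner_sum_pos_if_margT_pos[OF Q])
    then show "0 < inner_sum \<rho> \<eta> y powr (1 + \<rho>)"
      by simp
  qed (use joint_nonneg[OF Q] in \<open>auto simp: margT_def sum_nonneg\<close>)
  also have "\<dots> \<le> (\<Sum>y\<in>UNIV. \<Sum>x\<in>UNIV. Q y x *
      (ln (margT Q y) + (1 + \<rho>) * ln (Q y x / (margT Q y * tilted_weight \<rho> \<eta> y x))))"
    by (intro sum_mono log_sum_given_output[OF Q \<rho>])
  also have "\<dots> = divKL Q P W + \<rho> * A_TV Q P + \<eta> * B_TV Q W"
    by (rule divKL_A_B_eq_sum[OF Q \<rho>, symmetric])
  finally show ?thesis
    using Q gallager_sum_pos[of \<rho> \<eta>]
    by (simp add: E_0_eq_minus_ln_gallager_sum ln_div joint_dists_def margT_def)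
qed

lemma E_0_eq_divKL_A_B_tilted_joint:
  fixes \<rho> \<eta> :: real
  assumes \<rho>: "-1 < \<rho>"
  defines "Q \<equiv> tilted_joint \<rho> \<eta>"
  shows "E_0 W \<rho> \<eta> P = divKL Q P W + \<rho> * A_TV Q P + \<eta> * B_TV Q W"
proof -
  have Z: "0 < gallager_sum \<rho> \<eta>"
    by (rule gallager_sum_pos)
  have tilted_term: "Q y x * (ln (margT Q y) + (1 + \<rho>) * ln (Q y x / (margT Q y * tilted_weight \<rho> \<eta> y x)))
      = Q y x * - ln (gallager_sum \<rho> \<eta>)" for y x
  proof (cases "tilted_weight \<rho> \<eta> y x = 0")
    case False
    then have w: "0 < tilted_weight \<rho> \<eta> y x"
      using tilted_weight_nonneg[of \<rho> \<eta> y x] by (simp add: less_le)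
    then have g: "0 < inner_sum \<rho> \<eta> y"
      by (simp add: tilted_weight_pos_iff inner_sum_pos)
    have ratio: "Q y x / (margT Q y * tilted_weight \<rho> \<eta> y x) = 1 / inner_sum \<rho> \<eta> y"
      using g w Z by (simp add: Q_def margT_tilted_joint tilted_joint_def powr_add powr_one)
    have marginal: "ln (margT Q y) = (1 + \<rho>) * ln (inner_sum \<rho> \<eta> y) - ln (gallager_sum \<rho> \<eta>)"
      using g Z by (simp add: Q_def margT_tilted_joint ln_div)
    show ?thesis
      unfolding ratio marginal using g by (simp add: ln_div algebra_simps)
  qed (simp add: Q_def tilted_joint_def)
  have "divKL Q P W + \<rho> * A_TV Q P + \<eta> * B_TV Q W
      = (\<Sum>y\<in>UNIV. \<Sum>x\<in>UNIV. Q y x) * - ln (gallager_sum \<rho> \<eta>)"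
    unfolding divKL_A_B_eq_sum[OF tilted_joint_in_joint_dists[of \<rho> \<eta>, folded Q_def] \<rho>] tilted_term
    by (simp add: sum_distrib_right sum_negf)
  also have "\<dots> = E_0 W \<rho> \<eta> P"
    using tilted_joint_in_joint_dists[of \<rho> \<eta>]
    by (simp add: Q_def joint_dists_def E_0_eq_minus_ln_gallager_sum)
  finally show ?thesis ..
qed

lemma tilted_joint_pos: "0 < P x * W x y \<Longrightarrow> 0 < tilted_joint \<rho> \<eta> y x"
  using inner_sum_pos[of x y \<rho> \<eta>] gallager_sum_pos[of \<rho> \<eta>]
  by (simp add: tilted_joint_def tilted_weight_pos_iff)

lemma tilted_joint_eq_0:
  assumes "\<not> 0 < P x * W x y"
  shows "tilted_joint \<rho> \<eta> y x = 0"
proof -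
  have "\<not> 0 < tilted_weight \<rho> \<eta> y x"
    using assms by (simp add: tilted_weight_pos_iff)
  then have "tilted_weight \<rho> \<eta> y x = 0"
    using tilted_weight_nonneg[of \<rho> \<eta> y x] by simp
  then show ?thesis
    by (simp add: tilted_joint_def)
qed

lemma continuous_on_tilted_weight:
  "continuous_on multiplier_triangle (\<lambda>p. tilted_weight (fst p) (snd p) y x)"
  unfolding tilted_weight_def
  by (intro continuous_intros continuous_on_powr')
    (auto simp: mem_multiplier_triangle W_nonneg add_pos_nonneg)

lemma continuous_on_inner_sum:
  "continuous_on multiplier_triangle (\<lambda>p. inner_sum (fst p) (snd p) y)"
  unfolding inner_sum_def by (intro continuous_intros continuous_on_tilted_weight)

lemma continuous_on_gallager_sum:
  "continuous_on multiplier_triangle (\<lambda>p. gallager_sum (fst p) (snd p))"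
  unfolding gallager_sum_def
  by (intro continuous_intros continuous_on_powr' continuous_on_inner_sum)
    (auto simp: mem_multiplier_triangle inner_sum_nonneg add_pos_nonneg)

lemma continuous_on_tilted_joint:
  "continuous_on multiplier_triangle (\<lambda>p. tilted_joint (fst p) (snd p) y x)"
proof (cases "0 < P x * W x y")
  case True
  have "inner_sum \<rho> \<eta> y \<noteq> 0" for \<rho> \<eta>
    using inner_sum_pos[OF True, of \<rho> \<eta>] by simp
  then show ?thesis
    unfolding tilted_joint_def
    by (intro continuous_intros continuous_on_powr' continuous_on_inner_sum
        continuous_on_tilted_weight continuous_on_gallager_sum)
      (auto simp: less_imp_neq[OF gallager_sum_pos, symmetric])
next
  case False
  then show ?thesis
    by (simp add: tilted_joint_eq_0)
qed

lemma continuous_on_tilted_joint_mult_ln: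
  assumes "0 < P x * W x y \<Longrightarrow> continuous_on multiplier_triangle f"
    and "\<And>p. p \<in> multiplier_triangle \<Longrightarrow> 0 < P x * W x y \<Longrightarrow> f p \<noteq> 0"
  shows "continuous_on multiplier_triangle (\<lambda>p. tilted_joint (fst p) (snd p) y x * ln (f p))"
proof (cases "0 < P x * W x y")
  case True
  then show ?thesis
    using assms by (intro continuous_intros continuous_on_tilted_joint) auto
next
  case False
  then show ?thesis
    by (simp add: tilted_joint_eq_0)
qed

lemma continuous_on_margT_tilted_joint:
  "continuous_on multiplier_triangle (\<lambda>p. margT (tilted_joint (fst p) (snd p)) y)"
  unfolding margT_def by (intro continuous_intros continuous_on_tilted_joint)

lemma continuous_on_divKL_tilted_joint:
  "continuous_on multiplier_triangle (\<lambda>p. divKL (tilted_joint (fst p) (snd p)) P W)"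
  unfolding divKL_def
  by (intro continuous_on_sum continuous_on_tilted_joint_mult_ln continuous_intros
      continuous_on_tilted_joint) (auto simp: tilted_joint_pos less_imp_neq[symmetric])

lemma continuous_on_A_TV_tilted_joint:
  "continuous_on multiplier_triangle (\<lambda>p. A_TV (tilted_joint (fst p) (snd p)) P)"
proof -
  have "0 < margT (tilted_joint \<rho> \<eta>) y" if "0 < P x * W x y" for \<rho> \<eta> x y
    using tilted_joint_pos[OF that, of \<rho> \<eta>] joint_le_margT[OF tilted_joint_in_joint_dists] by (rule less_le_trans)
  then show ?thesis
    unfolding A_TV_def condV_def
    by (intro continuous_on_sum continuous_on_tilted_joint_mult_ln continuous_intros
        continuous_on_tilted_joint continuous_on_margT_tilted_joint)
      (auto simp: tilted_joint_pos less_imp_neq[symmetric] zero_less_mult_iff)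
qed

lemma continuous_on_B_TV_tilted_joint:
  "continuous_on multiplier_triangle (\<lambda>p. B_TV (tilted_joint (fst p) (snd p)) W)"
  unfolding B_TV_def by (intro continuous_intros continuous_on_tilted_joint)

context
  fixes R K :: real
begin

definition lagrangian :: "('y \<Rightarrow> 'x \<Rightarrow> real) \<Rightarrow> real \<times> real \<Rightarrow> real" where
  "lagrangian Q p = divKL Q P W + fst p * (A_TV Q P - R) + snd p * (B_TV Q W - K)"

lemma lagrangian_convex_combination:
  "lagrangian Q ((1 - t) *\<^sub>R a + t *\<^sub>R b) = (1 - t) * lagrangian Q a + t * lagrangian Q b"
  by (simp add: lagrangian_def algebra_simps)

lemma lagrangian_le_E_e_objective:
  "p \<in> multiplier_triangle \<Longrightarrow>
    lagrangian Q p \<le> divKL Q P W + posp (A_TV Q P - R + posp (B_TV Q W - K))"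
  using affine_le_posp_posp[of "snd p" "fst p" "A_TV Q P - R" "B_TV Q W - K"]
  by (simp add: lagrangian_def mem_multiplier_triangle)

lemma E_e_objective_eq_max_vertices:
  "divKL Q P W + posp (A_TV Q P - R + posp (B_TV Q W - K)) =
    max (lagrangian Q (0, 0)) (max (lagrangian Q (1, 0)) (lagrangian Q (1, 1)))"
  by (simp add: lagrangian_def posp_def max_def)

definition dual_exponent :: "real \<times> real \<Rightarrow> real" where
  "dual_exponent p = E_0 W (fst p) (snd p) P - fst p * R - snd p * K"

lemma dual_exponent_le_lagrangian:
  "p \<in> multiplier_triangle \<Longrightarrow> Q \<in> joint_dists P W \<Longrightarrow> dual_exponent p \<le> lagrangian Q p"
  using E_0_le_divKL_A_B[of Q "fst p" "snd p"]
  by (simp add: dual_exponent_def lagrangian_def mem_multiplier_triangle algebra_simps)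

lemma dual_exponent_eq_lagrangian_tilted_joint:
  "p \<in> multiplier_triangle \<Longrightarrow> dual_exponent p = lagrangian (tilted_joint (fst p) (snd p)) p"
  using E_0_eq_divKL_A_B_tilted_joint[of "fst p" "snd p"]
  by (simp add: dual_exponent_def lagrangian_def mem_multiplier_triangle algebra_simps)

lemma continuous_on_dual_exponent: "continuous_on multiplier_triangle dual_exponent"
  unfolding dual_exponent_def E_0_eq_minus_ln_gallager_sum
  by (intro continuous_intros continuous_on_gallager_sum)
    (simp add: less_imp_neq[OF gallager_sum_pos, symmetric])

lemma continuous_on_lagrangian_tilted_joint:
  "continuous_on multiplier_triangle (\<lambda>p. lagrangian (tilted_joint (fst p) (snd p)) v)"
  unfolding lagrangian_def
  by (intro continuous_intros continuous_on_divKL_tilted_joint continuous_on_A_TV_tilted_joint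
      continuous_on_B_TV_tilted_joint)

lemma tilted_joint_saddle_point:
  obtains p\<^sub>0 where "p\<^sub>0 \<in> multiplier_triangle"
    "\<And>v. v \<in> multiplier_triangle \<Longrightarrow>
      lagrangian (tilted_joint (fst p\<^sub>0) (snd p\<^sub>0)) v \<le> dual_exponent p\<^sub>0"
proof -
  have "(0, 0) \<in> multiplier_triangle"
    by (simp add: multiplier_triangle_def)
  then show thesis
    using saddle_point_of_lower_envelope[OF compact_multiplier_triangle convex_multiplier_triangle _
        continuous_on_dual_exponent dual_exponent_le_lagrangian _ lagrangian_convex_combination
        continuous_on_lagrangian_tilted_joint]
      that tilted_joint_in_joint_dists dual_exponent_eq_lagrangian_tilted_joint
    by blast
qed

theorem E_e_eq_SUP_dual_exponent: "E_e W P R K = (SUP p\<in>multiplier_triangle. dual_exponent p)"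
proof -
  obtain p\<^sub>0 where p\<^sub>0: "p\<^sub>0 \<in> multiplier_triangle" and saddle:
    "\<And>v. v \<in> multiplier_triangle \<Longrightarrow>
      lagrangian (tilted_joint (fst p\<^sub>0) (snd p\<^sub>0)) v \<le> dual_exponent p\<^sub>0"
    using tilted_joint_saddle_point by blast
  let ?Q\<^sub>0 = "tilted_joint (fst p\<^sub>0) (snd p\<^sub>0)"
  show ?thesis
    unfolding E_e_def
  proof (rule cINF_eq_cSUP_if_attained[where p\<^sub>0 = p\<^sub>0 and q\<^sub>0 = ?Q\<^sub>0])
    show "dual_exponent p \<le> divKL Q P W + posp (A_TV Q P - R + posp (B_TV Q W - K))"
      if "p \<in> multiplier_triangle" "Q \<in> joint_dists P W" for p Q
      using dual_exponent_le_lagrangian[OF that] lagrangian_le_E_e_objective[OF that(1)]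
      by (rule order.trans)
    show "divKL ?Q\<^sub>0 P W + posp (A_TV ?Q\<^sub>0 P - R + posp (B_TV ?Q\<^sub>0 W - K)) \<le> dual_exponent p\<^sub>0"
      unfolding E_e_objective_eq_max_vertices using saddle by (simp add: mem_multiplier_triangle)
  qed (use p\<^sub>0 tilted_joint_in_joint_dists in auto)
qed

end

end

theorem lemma7:
  fixes W :: "'x::finite \<Rightarrow> 'y::finite \<Rightarrow> real" and P :: "'x \<Rightarrow> real" and R K :: real
  assumes "channel W" and "distr P" and "R > 0" and "K > 0"
  shows "E_e W P R K =
    (SUP p\<in>{(\<rho>, \<eta>). 0 \<le> \<eta> \<and> \<eta> \<le> \<rho> \<and> \<rho> \<le> 1}.
       E_0 W (fst p) (snd p) P - fst p * R - snd p * K)"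
proof -
  interpret channel_input W P
    using assms(1,2) by unfold_locales
  show ?thesis
    using E_e_eq_SUP_dual_exponent[of R K]
    by (simp add: multiplier_triangle_def dual_exponent_def)
qed

end
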